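(* Let $G$ be a regular graph on $n$ vertices. Then there is an ordering of the edges of $G$ such that any $n/12$ consecutive edges in this ordering form a matching. *)

theory Defs
  imports Complex_Main
begin

definition simple_graph :: "'a set \<Rightarrow> 'a set set \<Rightarrow> bool" where
  "simple_graph V E \<longleftrightarrow> finite V \<and> (\<forall>e\<in>E. e \<subseteq> V \<and> card e = 2)"

definition degree :: "'a set set \<Rightarrow> 'a \<Rightarrow> nat" where
  "degree E v = card {e\<in>E. v \<in> e}"

definition regular_graph :: "'a set \<Rightarrow> 'a set set \<Rightarrow> bool" where
  "regular_graph V E \<longleftrightarrow> simple_graph V E \<and> (\<exists>d. \<forall>v\<in>V. degree E v = d)"

definition is_matching :: "'a set set \<Rightarrow> bool" where
  "is_matching M \<longleftrightarrow> (\<forall>e\<in>M. \<forall>f\<in>M. e \<noteq> f \<longrightarrow> e \<inter> f = {})"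

end

theory Submission
  imports Defs
begin

text \<open>Colour the edges of a \<open>d\<close>-regular graph greedily with \<open>2d\<close> colours and rebalance the
  colour classes by alternating-path exchanges, which decrease the sum of the squared class sizes,
  until any two classes differ in size by at most one. As there are \<open>nd/2\<close> edges, every class is
  then a matching with at least \<open>n/4 \<ge> 3k\<close> edges, where \<open>k = \<lfloor>n/12\<rfloor>\<close>. List the classes one
  after another, starting each class with \<open>k\<close> of its edges that avoid the at most \<open>2k\<close> vertices
  covered by the previous \<open>k\<close> edges: then any \<open>k\<close> consecutive edges are pairwise disjoint.\<close>

lemma is_matching_subset: "is_matching M \<Longrightarrow> N \<subseteq> M \<Longrightarrow> is_matching N"
  unfolding is_matching_def by blast

lemma is_matching_insert:
  "is_matching (insert e M) \<longleftrightarrow> is_matching M \<and> (\<forall>f\<in>M. f \<noteq> e \<longrightarrow> e \<inter> f = {})"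
  unfolding is_matching_def by blast

lemma is_matchingD: "is_matching M \<Longrightarrow> e \<in> M \<Longrightarrow> f \<in> M \<Longrightarrow> e \<noteq> f \<Longrightarrow> e \<inter> f = {}"
  unfolding is_matching_def by blast

lemma card_2_obtain_other:
  assumes "card e = 2" "v \<in> e"
  obtains w where "e = {v, w}" "w \<noteq> v"
proof -
  obtain y z where "e = {y, z}" "y \<noteq> z" using assms(1) by (meson card_2_iff)
  then show thesis using assms(2) that by (metis insert_commute insertE singletonD)
qed

lemma card_Union_matching:
  assumes "finite M" "is_matching M" "\<forall>e\<in>M. card e = 2"
  shows "card (\<Union>M) = 2 * card M"
proof -
  have "card (\<Union>M) = sum card M"
    using assms unfolding is_matching_def
    by (intro card_Union_disjoint) (auto simp: pairwise_def disjnt_def intro: card_ge_0_finite)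
  also have "\<dots> = 2 * card M" using assms(3) by simp
  finally show ?thesis .
qed

lemma card_Union_le_double:
  assumes "\<forall>e\<in>M. card e = 2"
  shows "card (\<Union>M) \<le> 2 * card M"
proof -
  have "card (\<Union>M) \<le> sum card M" by (rule card_Union_le_sum_card)
  also have "\<dots> = 2 * card M" using assms by simp
  finally show ?thesis .
qed

lemma matching_uncovered_vertex:
  assumes "finite A" "finite B" "is_matching A" "\<forall>e\<in>A \<union> B. card e = 2" "card B < card A"
  obtains a v where "a \<in> A" "v \<in> a" "v \<notin> \<Union>B"
proof -
  have "\<not> \<Union>A \<subseteq> \<Union>B"
  proof
    assume "\<Union>A \<subseteq> \<Union>B"
    moreover have "finite (\<Union>B)"
      using assms(2,4) by (intro finite_Union) (auto intro: card_ge_0_finite)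
    ultimately have "card (\<Union>A) \<le> card (\<Union>B)" by (rule card_mono[rotated])
    with card_Union_matching[of A] card_Union_le_double[of B] assms show False by auto
  qed
  then show thesis using that by blast
qed

text \<open>Whichever of the two matchings partitioning \<open>C\<close> avoids \<open>b\<close> receives \<open>b\<close>; the other one
  receives \<open>a\<close>.\<close>
lemma matching_pair_insert:
  assumes "is_matching A" "is_matching B" "A \<inter> B = {}" "A \<union> B = C" "finite C"
    and "a \<notin> C" "b \<notin> C" "a \<noteq> b"
    and a_free: "\<forall>f\<in>C. f \<inter> a = {}"
    and b_unique: "\<forall>f\<in>C. \<forall>g\<in>C. f \<inter> b \<noteq> {} \<longrightarrow> g \<inter> b \<noteq> {} \<longrightarrow> f = g"
  shows "\<exists>A' B'. is_matching A' \<and> is_matching B' \<and> A' \<inter> B' = {} \<and>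
           A' \<union> B' = insert a (insert b C) \<and> card A' = Suc (card A) \<and> card B' = Suc (card B)"
proof -
  have fin: "finite A" "finite B" using assms(4,5) by auto
  have notin: "a \<notin> A" "a \<notin> B" "b \<notin> A" "b \<notin> B" using assms(4,6,7) by auto
  show ?thesis
  proof (cases "\<exists>g\<in>B. g \<inter> b \<noteq> {}")
    case True
    then have "\<forall>f\<in>A. b \<inter> f = {}" using b_unique assms(3,4) by blast
    then have "is_matching (insert b A)" "is_matching (insert a B)"
      using assms(1,2,4) a_free by (auto simp: is_matching_insert)
    then show ?thesis
      using assms(3,4,8) notin fin by (intro exI[of _ "insert b A"] exI[of _ "insert a B"]) auto
  next
    case False
    then have "is_matching (insert a A)" "is_matching (insert b B)"
      using assms(1,2,4) a_free by (auto simp: is_matching_insert)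
    then show ?thesis
      using assms(3,4,8) notin fin by (intro exI[of _ "insert a A"] exI[of _ "insert b B"]) auto
  qed
qed

lemma matching_alternating_start:
  assumes "finite A" "finite B" "is_matching A" "\<forall>e\<in>A \<union> B. card e = 2" "card B < card A"
    and "\<forall>a\<in>A. \<exists>b\<in>B. a \<inter> b \<noteq> {}"
  obtains a b v w x where "a \<in> A" "b \<in> B" "a = {v, w}" "b = {w, x}" "v \<notin> \<Union>B"
proof -
  obtain a v where a: "a \<in> A" "v \<in> a" "v \<notin> \<Union>B"
    using matching_uncovered_vertex[OF assms(1-5)] by blast
  have "card a = 2" using assms(4) a(1) by blast
  from this a(2) obtain w where w: "a = {v, w}" "w \<noteq> v"
    by (rule card_2_obtain_other)
  obtain b where "b \<in> B" "a \<inter> b \<noteq> {}" using assms(6) a(1) by blast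
  then have b: "b \<in> B" "w \<in> b" using a(3) w(1) by auto
  have "card b = 2" using assms(4) b(1) by blast
  from this b(2) obtain x where "b = {w, x}" by (rule card_2_obtain_other)
  with a(1,3) b(1) w(1) show thesis using that by blast
qed

lemma alternating_start_pendant:
  assumes "is_matching A" "is_matching B" "A \<inter> B = {}"
    and "a \<in> A" "b \<in> B" "a = {v, w}" "b = {w, x}" "v \<notin> \<Union>B"
  defines "C \<equiv> (A - {a}) \<union> (B - {b})"
  shows "\<forall>f\<in>C. f \<inter> a = {}"
    and "\<forall>f\<in>C. \<forall>g\<in>C. f \<inter> b \<noteq> {} \<longrightarrow> g \<inter> b \<noteq> {} \<longrightarrow> f = g"
proof -
  show a_free: "\<forall>f\<in>C. f \<inter> a = {}"
    using is_matchingD[OF assms(1) _ assms(4)] is_matchingD[OF assms(2) _ assms(5)] assms(4-8)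
    unfolding C_def by blast
  have meets_b: "f \<in> A \<and> x \<in> f" if "f \<in> C" "f \<inter> b \<noteq> {}" for f
    using that a_free is_matchingD[OF assms(2) _ assms(5)] assms(3,6,7) unfolding C_def by blast
  show "\<forall>f\<in>C. \<forall>g\<in>C. f \<inter> b \<noteq> {} \<longrightarrow> g \<inter> b \<noteq> {} \<longrightarrow> f = g"
  proof (intro ballI impI)
    fix f g assume "f \<in> C" "g \<in> C" "f \<inter> b \<noteq> {}" "g \<inter> b \<noteq> {}"
    with meets_b have "f \<in> A" "g \<in> A" "x \<in> f \<inter> g" by auto
    then show "f = g" using is_matchingD[OF assms(1)] by blast
  qed
qed

text \<open>Augmenting-path exchange: strip the first two edges of an alternating path, exchange in the
  rest by induction, and put the two edges back with \<open>matching_pair_insert\<close>.\<close>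
lemma matching_exchange:
  assumes "finite A" "finite B" "A \<inter> B = {}" "is_matching A" "is_matching B"
    "\<forall>e\<in>A \<union> B. card e = 2" "card B < card A"
  shows "\<exists>A' B'. is_matching A' \<and> is_matching B' \<and> A' \<inter> B' = {} \<and> A' \<union> B' = A \<union> B
           \<and> card A' = card A - 1 \<and> card B' = Suc (card B)"
  using assms
proof (induction "card A" arbitrary: A B rule: less_induct)
  case less
  show ?case
  proof (cases "\<exists>a\<in>A. \<forall>b\<in>B. a \<inter> b = {}")
    case True
    then obtain a where a: "a \<in> A" "\<forall>b\<in>B. a \<inter> b = {}" by blast
    then have "is_matching (A - {a})" "is_matching (insert a B)"
      using less.prems(4,5) by (auto simp: is_matching_insert intro: is_matching_subset)
    moreover have "a \<notin> B" using a(1) less.prems(3) by blast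
    ultimately show ?thesis
      using a(1) less.prems(1-3)
      by (intro exI[of _ "A - {a}"] exI[of _ "insert a B"]) auto
  next
    case False
    then have "\<forall>a\<in>A. \<exists>b\<in>B. a \<inter> b \<noteq> {}" by blast
    then obtain a b v w x where ab: "a \<in> A" "b \<in> B" "a = {v, w}" "b = {w, x}" "v \<notin> \<Union>B"
      by (rule matching_alternating_start[OF less.prems(1,2,4,6,7)])
    define C where "C = (A - {a}) \<union> (B - {b})"
    have "card B > 0" using ab(2) less.prems(2) card_gt_0_iff by blast
    then have smaller: "card (A - {a}) < card A" "card (B - {b}) < card (A - {a})"
      using ab(1,2) less.prems(1,2,7) by (auto simp: card_Diff1_less)
    have "finite (A - {a})" "finite (B - {b})" "(A - {a}) \<inter> (B - {b}) = {}"
      "is_matching (A - {a})" "is_matching (B - {b})" "\<forall>e\<in>(A - {a}) \<union> (B - {b}). card e = 2"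
      using less.prems(1-6) by (auto intro: is_matching_subset)
    from less.hyps[OF smaller(1) this smaller(2)]
    obtain A1 B1 where AB1: "is_matching A1" "is_matching B1" "A1 \<inter> B1 = {}" "A1 \<union> B1 = C"
        "card A1 = card (A - {a}) - 1" "card B1 = Suc (card (B - {b}))"
      unfolding C_def by blast
    have "finite C" "a \<notin> C" "b \<notin> C" "a \<noteq> b"
      using ab(1,2) less.prems(1-3) unfolding C_def by auto
    from matching_pair_insert[OF AB1(1-4) this
        alternating_start_pendant[OF less.prems(4,5,3) ab, folded C_def]]
    obtain A' B' where "is_matching A'" "is_matching B'" "A' \<inter> B' = {}"
        "A' \<union> B' = insert a (insert b C)" "card A' = Suc (card A1)" "card B' = Suc (card B1)"
      by blast
    moreover have "insert a (insert b C) = A \<union> B" using ab(1,2) unfolding C_def by blast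
    moreover have "Suc (card A1) = card A - 1" "Suc (card B1) = Suc (card B)"
      using AB1(5,6) ab(1,2) less.prems(1,2) \<open>card B > 0\<close> smaller(2) by auto
    ultimately show ?thesis by metis
  qed
qed

definition proper_edge_colouring :: "'a set set \<Rightarrow> nat \<Rightarrow> ('a set \<Rightarrow> nat) \<Rightarrow> bool" where
  "proper_edge_colouring E c col \<longleftrightarrow>
     (\<forall>e\<in>E. col e < c) \<and> (\<forall>e\<in>E. \<forall>f\<in>E. e \<noteq> f \<and> e \<inter> f \<noteq> {} \<longrightarrow> col e \<noteq> col f)"

definition colour_class :: "'a set set \<Rightarrow> ('a set \<Rightarrow> nat) \<Rightarrow> nat \<Rightarrow> 'a set set" where
  "colour_class E col l = {e\<in>E. col e = l}"

lemma proper_edge_colouring_iff_matching_classes: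
  "proper_edge_colouring E c col \<longleftrightarrow> (\<forall>e\<in>E. col e < c) \<and> (\<forall>l. is_matching (colour_class E col l))"
  unfolding proper_edge_colouring_def colour_class_def is_matching_def by blast

lemma card_eq_sum_colour_classes:
  assumes "finite E" "\<forall>e\<in>E. col e < c"
  shows "card E = (\<Sum>l<c. card (colour_class E col l))"
proof -
  have "col ` E \<subseteq> {..<c}" using assms(2) by auto
  from sum.group[OF assms(1) finite_lessThan this, of "\<lambda>_. 1 :: nat"]
  show ?thesis unfolding colour_class_def by simp
qed

lemma greedy_edge_colouring:
  assumes "finite E" "\<forall>e\<in>E. card {f\<in>E. f \<noteq> e \<and> f \<inter> e \<noteq> {}} < c"
  shows "\<exists>col. proper_edge_colouring E c col"
proof -
  have "\<exists>col. proper_edge_colouring F c col" if "finite F" "F \<subseteq> E" for F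
    using that
  proof (induction F rule: finite_induct)
    case empty
    show ?case unfolding proper_edge_colouring_def by simp
  next
    case (insert e F)
    then obtain col where col: "proper_edge_colouring F c col" by blast
    define N where "N = {f\<in>F. f \<noteq> e \<and> f \<inter> e \<noteq> {}}"
    have "card (col ` N) \<le> card N" by (rule card_image_le) (use insert.hyps(1) in \<open>simp add: N_def\<close>)
    also have "card N \<le> card {f\<in>E. f \<noteq> e \<and> f \<inter> e \<noteq> {}}"
      using insert.prems assms(1) unfolding N_def by (intro card_mono) auto
    also have "\<dots> < c" using assms(2) insert.prems by blast
    finally have "\<not> {..<c} \<subseteq> col ` N"
      using card_mono[of "col ` N" "{..<c}"] insert.hyps(1) unfolding N_def by auto
    then obtain i where i: "i < c" "i \<notin> col ` N" by blast
    have "proper_edge_colouring (insert e F) c (col(e := i))"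
      using col i insert.hyps(2) unfolding proper_edge_colouring_def N_def by (auto simp: Int_commute)
    then show ?case by blast
  qed
  then show ?thesis using assms(1) by blast
qed

lemma sum_less_by_two_terms:
  fixes g h :: "'i \<Rightarrow> nat"
  assumes "finite S" "i \<in> S" "j \<in> S" "i \<noteq> j"
    and "\<forall>l\<in>S - {i, j}. g l = h l" "g i + g j < h i + h j"
  shows "sum g S < sum h S"
proof -
  have split: "sum f S = sum f (S - {i, j}) + (f i + f j)" for f :: "'i \<Rightarrow> nat"
    using sum.subset_diff[of "{i, j}" S f] assms(1-4) by simp
  show ?thesis unfolding split[of g] split[of h] using assms(5,6) by simp
qed

lemma sum_squares_shift_less:
  fixes p q :: nat
  assumes "q + 2 \<le> p"
  shows "(p - 1)^2 + (Suc q)^2 < p^2 + q^2"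
proof -
  obtain r where "p = q + 2 + r" using le_Suc_ex[OF assms] by blast
  then show ?thesis by (simp add: power2_eq_square)
qed

lemma recolour_decreases_sum_squares:
  assumes fin: "finite E" and e2: "\<forall>e\<in>E. card e = 2" and pc: "proper_edge_colouring E c col"
    and ij: "i < c" "j < c" and big: "card (colour_class E col j) + 2 \<le> card (colour_class E col i)"
  shows "\<exists>col'. proper_edge_colouring E c col' \<and>
           (\<Sum>l<c. card (colour_class E col' l)^2) < (\<Sum>l<c. card (colour_class E col l)^2)"
proof -
  let ?A = "colour_class E col i" and ?B = "colour_class E col j"
  have "i \<noteq> j" using big by auto
  have "finite ?A" "finite ?B" "?A \<inter> ?B = {}" "is_matching ?A" "is_matching ?B"
    "\<forall>e\<in>?A \<union> ?B. card e = 2" "card ?B < card ?A"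
    using fin e2 big \<open>i \<noteq> j\<close> pc unfolding proper_edge_colouring_iff_matching_classes
    by (auto simp: colour_class_def)
  from matching_exchange[OF this] obtain A' B' where AB: "is_matching A'" "is_matching B'"
      "A' \<inter> B' = {}" "A' \<union> B' = ?A \<union> ?B" "card A' = card ?A - 1" "card B' = Suc (card ?B)"
    by blast
  define col' where "col' e = (if e \<in> A' then i else if e \<in> B' then j else col e)" for e
  have classes: "colour_class E col' i = A'" "colour_class E col' j = B'"
    "\<And>l. l \<noteq> i \<Longrightarrow> l \<noteq> j \<Longrightarrow> colour_class E col' l = colour_class E col l"
    using AB(3,4) \<open>i \<noteq> j\<close> unfolding colour_class_def col'_def by auto
  have "\<forall>e\<in>E. col' e < c" using pc ij unfolding proper_edge_colouring_def col'_def by auto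
  moreover have "is_matching (colour_class E col' l)" for l
    using classes AB(1,2) pc unfolding proper_edge_colouring_iff_matching_classes
    by (cases "l = i \<or> l = j") auto
  ultimately have "proper_edge_colouring E c col'"
    unfolding proper_edge_colouring_iff_matching_classes by blast
  moreover have "\<forall>l\<in>{..<c} - {i, j}. card (colour_class E col' l)^2 = card (colour_class E col l)^2"
    using classes(3) by auto
  moreover have "card (colour_class E col' i)^2 + card (colour_class E col' j)^2 < card ?A^2 + card ?B^2"
    using sum_squares_shift_less[OF big] by (simp only: classes(1,2) AB(5,6))
  ultimately show ?thesis
    using ij \<open>i \<noteq> j\<close> by (intro exI[of _ col'] conjI sum_less_by_two_terms) auto
qed

lemma exists_balanced_edge_colouring:
  assumes "finite E" "\<forall>e\<in>E. card e = 2" "proper_edge_colouring E c col0"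
  shows "\<exists>col. proper_edge_colouring E c col \<and>
           (\<forall>i<c. \<forall>j<c. card (colour_class E col i) \<le> card (colour_class E col j) + 1)"
proof -
  define energy where "energy col = (\<Sum>l<c. card (colour_class E col l)^2)" for col
  obtain col where col: "proper_edge_colouring E c col"
    and least: "\<forall>col'. proper_edge_colouring E c col' \<longrightarrow> energy col \<le> energy col'"
    using ex_has_least_nat[of "proper_edge_colouring E c" col0 energy] assms(3) by blast
  have "\<not> (\<exists>i<c. \<exists>j<c. card (colour_class E col j) + 2 \<le> card (colour_class E col i))"
  proof
    assume "\<exists>i<c. \<exists>j<c. card (colour_class E col j) + 2 \<le> card (colour_class E col i)"
    then obtain col' where "proper_edge_colouring E c col'" "energy col' < energy col"
      using recolour_decreases_sum_squares[OF assms(1,2) col] unfolding energy_def by blast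
    with least show False by (meson not_le)
  qed
  with col show ?thesis by fastforce
qed

lemma balanced_lower_bound:
  fixes a :: "nat \<Rightarrow> nat"
  assumes bal: "\<forall>i<c. \<forall>j<c. a i \<le> a j + 1" and total: "c * m \<le> (\<Sum>l<c. a l)" and "j < c"
  shows "m \<le> a j"
proof (rule ccontr)
  assume "\<not> m \<le> a j"
  then have "\<forall>l\<in>{..<c}. a l \<le> m" "a j < m" using bal \<open>j < c\<close> by fastforce+
  then have "(\<Sum>l<c. a l) < (\<Sum>l<c. m)"
    using \<open>j < c\<close> by (intro sum_strict_mono_ex1) auto
  with total show False by simp
qed

definition disjoint_within :: "nat \<Rightarrow> 'a set list \<Rightarrow> bool" where
  "disjoint_within k es \<longleftrightarrow>
     (\<forall>p q. p < q \<and> q < length es \<and> q - p < k \<longrightarrow> es ! p \<inter> es ! q = {})"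

lemma disjoint_withinD:
  assumes "disjoint_within k es" "p \<noteq> q" "p < length es" "q < length es" "p < q + k" "q < p + k"
  shows "es ! p \<inter> es ! q = {}"
proof (cases "p < q")
  case True
  with assms show ?thesis unfolding disjoint_within_def by simp
next
  case False
  with assms have "es ! q \<inter> es ! p = {}" unfolding disjoint_within_def by simp
  then show ?thesis by blast
qed

lemma disjoint_within_window_matching:
  assumes "disjoint_within k es" "m \<le> k"
  shows "is_matching (set (take m (drop i es)))"
  unfolding is_matching_def
proof (intro ballI impI)
  fix e f assume ef: "e \<in> set (take m (drop i es))" "f \<in> set (take m (drop i es))" "e \<noteq> f"
  obtain s where s: "s < m" "i + s < length es" "e = es ! (i + s)"
    using ef(1) by (auto simp: in_set_conv_nth)
  obtain t where t: "t < m" "i + t < length es" "f = es ! (i + t)"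
    using ef(2) by (auto simp: in_set_conv_nth)
  have "i + s \<noteq> i + t" using s(3) t(3) ef(3) by auto
  then have "es ! (i + s) \<inter> es ! (i + t) = {}"
    using assms s(1,2) t(1,2) by (intro disjoint_withinD) auto
  then show "e \<inter> f = {}" using s(3) t(3) by simp
qed

lemma disjoint_within_matching_list:
  assumes "distinct L" "is_matching (set L)"
  shows "disjoint_within k L"
  unfolding disjoint_within_def
proof (intro allI impI)
  fix p q assume "p < q \<and> q < length L \<and> q - p < k"
  then have "L ! p \<noteq> L ! q" "L ! p \<in> set L" "L ! q \<in> set L"
    using assms(1) by (auto simp: nth_eq_iff_index_eq)
  then show "L ! p \<inter> L ! q = {}" using is_matchingD[OF assms(2)] by blast
qed

lemma disjoint_within_append:
  assumes "disjoint_within k es" "disjoint_within k L"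
    and seam: "\<forall>e\<in>set (drop (length es - k) es). \<forall>f\<in>set (take k L). e \<inter> f = {}"
  shows "disjoint_within k (es @ L)"
  unfolding disjoint_within_def
proof (intro allI impI)
  fix p q assume pq: "p < q \<and> q < length (es @ L) \<and> q - p < k"
  consider "q < length es" | "p < length es" "length es \<le> q" | "length es \<le> p" by linarith
  then show "(es @ L) ! p \<inter> (es @ L) ! q = {}"
  proof cases
    case 1
    then show ?thesis using pq assms(1) unfolding disjoint_within_def by (simp add: nth_append)
  next
    case 2
    have "drop (length es - k) es ! (p - (length es - k)) = es ! p"
      "p - (length es - k) < length (drop (length es - k) es)"
      using 2 pq by auto
    then have "es ! p \<in> set (drop (length es - k) es)" by (metis nth_mem)
    moreover have "take k L ! (q - length es) = L ! (q - length es)"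
      "q - length es < length (take k L)"
      using 2 pq by auto
    then have "L ! (q - length es) \<in> set (take k L)" by (metis nth_mem)
    ultimately show ?thesis using 2 seam by (simp add: nth_append)
  next
    case 3
    then have "L ! (p - length es) \<inter> L ! (q - length es) = {}"
      using pq by (intro disjoint_withinD[OF assms(2)]) auto
    then show ?thesis using 3 pq by (simp add: nth_append)
  qed
qed

lemma matching_card_meeting_le:
  assumes "is_matching M" "finite T"
  shows "card {e\<in>M. e \<inter> T \<noteq> {}} \<le> card T"
proof -
  let ?Bad = "{e\<in>M. e \<inter> T \<noteq> {}}"
  define pick where "pick e = (SOME v. v \<in> e \<inter> T)" for e
  have pick: "pick e \<in> e \<inter> T" if "e \<in> ?Bad" for e
  proof -
    have "\<exists>v. v \<in> e \<inter> T" using that by blast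
    then show ?thesis unfolding pick_def by (rule someI_ex)
  qed
  have "inj_on pick ?Bad"
  proof (rule inj_onI)
    fix e f assume ef: "e \<in> ?Bad" "f \<in> ?Bad" "pick e = pick f"
    then have "e \<inter> f \<noteq> {}" using pick[of e] pick[of f] by auto
    then show "e = f" using ef(1,2) is_matchingD[OF assms(1), of e f] by auto
  qed
  moreover have "pick ` ?Bad \<subseteq> T" using pick by blast
  ultimately show ?thesis using assms(2) by (rule card_inj_on_le)
qed

text \<open>The last \<open>k\<close> edges cover at most \<open>2k\<close> vertices, which meet at most \<open>2k\<close> edges of \<open>M\<close>;
  so at least \<open>k\<close> edges of \<open>M\<close> avoid them and can be placed first.\<close>
lemma disjoint_within_append_matching:
  assumes "disjoint_within k es" "\<forall>e\<in>set es. card e = 2"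
    and "finite M" "is_matching M" "3 * k \<le> card M"
  shows "\<exists>L. distinct L \<and> set L = M \<and> disjoint_within k (es @ L)"
proof -
  define T where "T = \<Union>(set (drop (length es - k) es))"
  have "set (drop (length es - k) es) \<subseteq> set es" by (rule set_drop_subset)
  then have "card T \<le> 2 * card (set (drop (length es - k) es))"
    unfolding T_def using assms(2) by (intro card_Union_le_double) blast
  also have "\<dots> \<le> 2 * k" using card_length[of "drop (length es - k) es"] by simp
  finally have card_T: "card T \<le> 2 * k" .
  have "finite e" if "e \<in> set es" for e
    using assms(2) that by (metis card.infinite zero_neq_numeral)
  then have "finite T"
    unfolding T_def using \<open>set (drop _ es) \<subseteq> set es\<close> by blast
  define Bad where "Bad = {e\<in>M. e \<inter> T \<noteq> {}}"
  have "card Bad \<le> 2 * k"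
    using matching_card_meeting_le[OF assms(4) \<open>finite T\<close>] card_T unfolding Bad_def by linarith
  moreover have "card (M - Bad) = card M - card Bad"
    using assms(3) unfolding Bad_def by (intro card_Diff_subset) auto
  ultimately have "k \<le> card (M - Bad)" using assms(5) by linarith
  then obtain S where S: "S \<subseteq> M - Bad" "card S = k"
    by (meson obtain_subset_with_card_n)
  have "finite S" using S(1) assms(3) finite_subset by blast
  obtain L1 where L1: "set L1 = S" "distinct L1" using finite_distinct_list[OF \<open>finite S\<close>] by blast
  obtain L2 where L2: "set L2 = M - S" "distinct L2"
    using finite_distinct_list[of "M - S"] assms(3) by blast
  have "length L1 = k" using L1 S(2) distinct_card by fastforce
  then have "take k (L1 @ L2) = L1" by simp
  then have "\<forall>f\<in>set (take k (L1 @ L2)). f \<inter> T = {}"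
    using S(1) L1(1) unfolding Bad_def by auto
  then have seam: "\<forall>e\<in>set (drop (length es - k) es). \<forall>f\<in>set (take k (L1 @ L2)). e \<inter> f = {}"
    unfolding T_def by blast
  have "distinct (L1 @ L2)" "set (L1 @ L2) = M" using L1 L2 S(1) by auto
  moreover from this have "disjoint_within k (L1 @ L2)"
    using assms(4) by (intro disjoint_within_matching_list) auto
  ultimately show ?thesis using disjoint_within_append[OF assms(1) _ seam] by blast
qed

lemma disjoint_within_concat_colour_classes:
  assumes "finite E" "\<forall>e\<in>E. card e = 2" "proper_edge_colouring E c col"
    and "\<forall>l<c. 3 * k \<le> card (colour_class E col l)"
  shows "\<exists>es. distinct es \<and> set es = E \<and> disjoint_within k es"
proof -
  have "\<exists>es. distinct es \<and> set es = {e\<in>E. col e < j} \<and> disjoint_within k es" if "j \<le> c" for j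
    using that
  proof (induction j)
    case 0
    show ?case by (intro exI[of _ "[]"]) (simp add: disjoint_within_def)
  next
    case (Suc j)
    then obtain es where es: "distinct es" "set es = {e\<in>E. col e < j}" "disjoint_within k es"
      by auto
    have "\<forall>e\<in>set es. card e = 2" using assms(2) es(2) by auto
    moreover have "finite (colour_class E col j)" using assms(1) unfolding colour_class_def by simp
    moreover have "is_matching (colour_class E col j)"
      using assms(3) unfolding proper_edge_colouring_iff_matching_classes by blast
    moreover have "3 * k \<le> card (colour_class E col j)" using assms(4) Suc.prems by simp
    ultimately obtain L where "distinct L" "set L = colour_class E col j" "disjoint_within k (es @ L)"
      using disjoint_within_append_matching[OF es(3)] by blast
    moreover have "{e\<in>E. col e < Suc j} = {e\<in>E. col e < j} \<union> colour_class E col j"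
      unfolding colour_class_def by auto
    ultimately show ?case using es(1,2) unfolding colour_class_def
      by (intro exI[of _ "es @ L"]) auto
  qed
  moreover have "{e\<in>E. col e < c} = E" using assms(3) unfolding proper_edge_colouring_def by auto
  ultimately show ?thesis by fastforce
qed

lemma simple_graph_finite_edges: "simple_graph V E \<Longrightarrow> finite E"
  unfolding simple_graph_def by (auto intro: finite_subset[of E "Pow V"])

lemma sum_degree_eq_twice_card_edges:
  assumes "simple_graph V E"
  shows "(\<Sum>v\<in>V. degree E v) = 2 * card E"
proof -
  have fin: "finite V" "finite E" and sub: "\<forall>e\<in>E. e \<subseteq> V \<and> card e = 2"
    using assms simple_graph_finite_edges unfolding simple_graph_def by auto
  have "(\<Sum>v\<in>V. degree E v) = (\<Sum>v\<in>V. \<Sum>e\<in>E. if v \<in> e then 1 else 0)"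
    unfolding degree_def using fin by (simp add: sum.If_cases Int_def conj_commute)
  also have "\<dots> = (\<Sum>e\<in>E. \<Sum>v\<in>V. if v \<in> e then 1 else 0)" by (rule sum.swap)
  also have "\<dots> = (\<Sum>e\<in>E. card e)"
  proof (intro sum.cong refl)
    fix e assume "e \<in> E"
    then have "V \<inter> {v. v \<in> e} = e" using sub by auto
    then show "(\<Sum>v\<in>V. if v \<in> e then 1 else 0) = card e" using fin(1) by (simp add: sum.If_cases)
  qed
  also have "\<dots> = 2 * card E" using sub by simp
  finally show ?thesis .
qed

lemma regular_card_adjacent_edges_less:
  assumes "simple_graph V E" "\<forall>v\<in>V. degree E v = d" "e \<in> E"
  shows "card {f\<in>E. f \<noteq> e \<and> f \<inter> e \<noteq> {}} < 2 * d"
proof -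
  have fin: "finite E" using assms(1) by (rule simple_graph_finite_edges)
  obtain u w where uw: "e = {u, w}" "u \<in> V" "w \<in> V"
    using assms(1,3) unfolding simple_graph_def by (metis card_2_iff insert_subset)
  have "{f\<in>E. f \<noteq> e \<and> f \<inter> e \<noteq> {}} \<subseteq> ({f\<in>E. u \<in> f} - {e}) \<union> ({f\<in>E. w \<in> f} - {e})"
    using uw(1) by blast
  then have "card {f\<in>E. f \<noteq> e \<and> f \<inter> e \<noteq> {}}
      \<le> card (({f\<in>E. u \<in> f} - {e}) \<union> ({f\<in>E. w \<in> f} - {e}))"
    using fin by (intro card_mono) auto
  also have "\<dots> \<le> card ({f\<in>E. u \<in> f} - {e}) + card ({f\<in>E. w \<in> f} - {e})"
    by (rule card_Un_le)
  also have "\<dots> < degree E u + degree E w"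
    unfolding degree_def using fin assms(3) uw(1)
    by (intro add_strict_mono card_Diff1_less) auto
  finally show ?thesis using assms(2) uw(2,3) by simp
qed

lemma regular_graph_edge_ordering:
  assumes "regular_graph V E"
  shows "\<exists>es. distinct es \<and> set es = E \<and> disjoint_within (card V div 12) es"
proof -
  obtain d where G: "simple_graph V E" and deg: "\<forall>v\<in>V. degree E v = d"
    using assms unfolding regular_graph_def by blast
  have fin: "finite E" and e2: "\<forall>e\<in>E. card e = 2"
    using G simple_graph_finite_edges unfolding simple_graph_def by auto
  define k where "k = card V div 12"
  obtain col0 where "proper_edge_colouring E (2 * d) col0"
    using greedy_edge_colouring[OF fin] regular_card_adjacent_edges_less[OF G deg] by blast
  then obtain col where col: "proper_edge_colouring E (2 * d) col"
    and bal: "\<forall>i<2 * d. \<forall>j<2 * d. card (colour_class E col i) \<le> card (colour_class E col j) + 1"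
    using exists_balanced_edge_colouring[OF fin e2] by blast
  have "card E = (\<Sum>l<2 * d. card (colour_class E col l))"
    using card_eq_sum_colour_classes[OF fin] col unfolding proper_edge_colouring_def by blast
  moreover have "d * card V = 2 * card E"
    using sum_degree_eq_twice_card_edges[OF G] deg by (simp add: mult.commute)
  moreover have "4 * (2 * d * (3 * k)) \<le> 2 * d * card V" unfolding k_def by simp
  ultimately have "2 * d * (3 * k) \<le> (\<Sum>l<2 * d. card (colour_class E col l))" by linarith
  then have "\<forall>l<2 * d. 3 * k \<le> card (colour_class E col l)"
    using balanced_lower_bound[OF bal] by simp
  then show ?thesis
    using disjoint_within_concat_colour_classes[OF fin e2 col] unfolding k_def by blast
qed

theorem fact4p16:
  fixes V :: "'a set" and E :: "'a set set"
  assumes "regular_graph V E"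
  shows "\<exists>es. distinct es \<and> set es = E \<and>
           (\<forall>i k. 12 * k \<le> card V \<and> i + k \<le> length es \<longrightarrow>
                  is_matching (set (take k (drop i es))))"
proof -
  obtain es where "distinct es" "set es = E" "disjoint_within (card V div 12) es"
    using regular_graph_edge_ordering[OF assms] by blast
  moreover have "k \<le> card V div 12" if "12 * k \<le> card V" for k using that by linarith
  ultimately show ?thesis using disjoint_within_window_matching by blast
qed

end
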